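(* Consider the single-sensor system $x_{k+1}=Ax_k+w_k$, $y_k=Cx_k+v_k$ ($w_k,v_k$ independent zero-mean Gaussian with covariances $Q,R$), $(A,C)$ detectable, $(A,Q^{1/2})$ stabilizable, with the local Kalman filter in steady state with filtered error covariance $\bar P$. Let $f(X)=AXA^T+Q$, $\mathcal{S}=\{f^n(\bar P):n\ge0\}$, $p,q\in[0,1]$, $E\ge0$, $\beta\in(0,1)$, $K\ge1$, and for $\gamma\in\{0,1\}$ let $c(\gamma)=\gamma(1-p)+(1-\gamma)q$. Define $J_k:\mathcal{S}\times\{0,1\}\to\mathbb{R}$ by $J_{K+1}\equiv0$ and, for $k=K,\dots,1$, $$J_k(P,\gamma)=\min_{\nu\in\{0,1\}}\Big\{\beta\big[\nu c(\gamma)\mathrm{tr}\bar P+(1-\nu c(\gamma))\mathrm{tr}f(P)\big]+(1-\beta)\nu E+\nu c(\gamma)J_{k+1}(\bar P,1)+(1-\nu c(\gamma))J_{k+1}(f(P),0)\Big\},$$ and for $k=1,\dots,K$, $\nu\in\{0,1\}$: $L_k^1(P,\nu)=\beta[\nu(1-p)\mathrm{tr}\bar P+(1-\nu(1-p))\mathrm{tr}f(P)]+(1-\beta)\nu E+\nu(1-p)J_{k+1}(\bar P,1)+(1-\nu(1-p))J_{k+1}(f(P),0)$, $L_k^0(P,\nu)=\beta[\nu q\,\mathrm{tr}\bar P+(1-\nu q)\mathrm{tr}f(P)]+(1-\beta)\nu E+\nu qJ_{k+1}(\bar P,1)+(1-\nu q)J_{k+1}(f(P),0)$. Then $P\mapsto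 L_k^1(P,1)-L_k^1(P,0)$ and $P\mapsto L_k^0(P,1)-L_k^0(P,0)$ are decreasing functions on $\mathcal{S}$.
   Context: For symmetric matrices, $X\le Y$ means $Y-X$ is positive semidefinite; a function $F$ on $\mathcal{S}$ is decreasing if $X\le Y\Rightarrow F(X)\ge F(Y)$. The setting models Markovian packet drops with $p=\mathbb{P}(\gamma_k=0\mid\gamma_{k-1}=1)$ and $q=\mathbb{P}(\gamma_k=1\mid\gamma_{k-1}=0)$. *)

theory Defs
  imports "HOL-Analysis.Analysis"
begin


primrec matpow :: "real^'n^'n \<Rightarrow> nat \<Rightarrow> real^'n^'n" where
  "matpow M 0 = mat 1"
| "matpow M (Suc k) = M ** matpow M k"

definition symmetric_mat :: "real^'n^'n \<Rightarrow> bool" where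
  "symmetric_mat M \<longleftrightarrow> transpose M = M"

definition psd :: "real^'n^'n \<Rightarrow> bool" where
  "psd M \<longleftrightarrow> symmetric_mat M \<and> (\<forall>x. 0 \<le> x \<bullet> (M *v x))"

definition pd :: "real^'n^'n \<Rightarrow> bool" where
  "pd M \<longleftrightarrow> symmetric_mat M \<and> (\<forall>x. x \<noteq> 0 \<longrightarrow> 0 < x \<bullet> (M *v x))"

definition loewner_le :: "real^'n^'n \<Rightarrow> real^'n^'n \<Rightarrow> bool" where
  "loewner_le X Y \<longleftrightarrow> psd (Y - X)"

text \<open>Schur stability: powers converge to zero (all eigenvalues inside the unit disk).\<close>
definition schur_stable :: "real^'n^'n \<Rightarrow> bool" where
  "schur_stable M \<longleftrightarrow> (matpow M \<longlonglongrightarrow> 0)"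

definition detectable :: "real^'n^'n \<Rightarrow> real^'n^'m \<Rightarrow> bool" where
  "detectable A C \<longleftrightarrow> (\<exists>L :: real^'m^'n. schur_stable (A + L ** C))"

definition stabilizable :: "real^'n^'n \<Rightarrow> real^'m^'n \<Rightarrow> bool" where
  "stabilizable A B \<longleftrightarrow> (\<exists>K :: real^'n^'m. schur_stable (A + B ** K))"

definition is_psd_sqrt :: "real^'n^'n \<Rightarrow> real^'n^'n \<Rightarrow> bool" where
  "is_psd_sqrt S Q \<longleftrightarrow> psd S \<and> S ** S = Q"

definition lyap :: "real^'n^'n \<Rightarrow> real^'n^'n \<Rightarrow> real^'n^'n \<Rightarrow> real^'n^'n" where
  "lyap A Q X = A ** X ** transpose A + Q"

text \<open>Steady-state filtered error covariance of the Kalman filter: Pbar is obtained by a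
  measurement update from the prior covariance Pm = f(Pbar), where Pm is a PSD solution of
  the discrete algebraic Riccati equation.\<close>
definition kalman_steady_filtered ::
  "real^'n^'n \<Rightarrow> real^'n^'m \<Rightarrow> real^'n^'n \<Rightarrow> real^'m^'m \<Rightarrow> real^'n^'n \<Rightarrow> bool" where
  "kalman_steady_filtered A C Q R Pbar \<longleftrightarrow>
     (let Pm = lyap A Q Pbar in
        psd Pm \<and>
        Pbar = Pm - Pm ** transpose C ** matrix_inv (C ** Pm ** transpose C + R) ** C ** Pm)"

definition stage_cost ::
  "real \<Rightarrow> real \<Rightarrow> real^'n^'n \<Rightarrow> (real^'n^'n \<Rightarrow> real^'n^'n)
   \<Rightarrow> (real^'n^'n \<Rightarrow> bool \<Rightarrow> real) \<Rightarrow> real^'n^'n \<Rightarrow> real \<Rightarrow> real \<Rightarrow> real" where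
  "stage_cost \<beta> E Pbar f Jn P \<nu> c =
     \<beta> * (\<nu> * c * trace Pbar + (1 - \<nu> * c) * trace (f P)) + (1 - \<beta>) * \<nu> * E
     + \<nu> * c * Jn Pbar True + (1 - \<nu> * c) * Jn (f P) False"

text \<open>c(gamma) = gamma (1-p) + (1-gamma) q, with gamma in {0,1} encoded as bool.\<close>
definition arr :: "real \<Rightarrow> real \<Rightarrow> bool \<Rightarrow> real" where
  "arr p q \<gamma> = of_bool \<gamma> * (1 - p) + (1 - of_bool \<gamma>) * q"

text \<open>Backward recursion indexed by the number m of remaining stages:
  Jrem 0 = J_{K+1} = 0, and Jrem (Suc m) = J_{K-m}.\<close>
fun Jrem ::
  "real \<Rightarrow> real \<Rightarrow> real \<Rightarrow> real \<Rightarrow> real^'n^'n \<Rightarrow> (real^'n^'n \<Rightarrow> real^'n^'n)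
   \<Rightarrow> nat \<Rightarrow> real^'n^'n \<Rightarrow> bool \<Rightarrow> real" where
  "Jrem p q \<beta> E Pbar f 0 P \<gamma> = 0"
| "Jrem p q \<beta> E Pbar f (Suc m) P \<gamma> =
     min (stage_cost \<beta> E Pbar f (Jrem p q \<beta> E Pbar f m) P 0 (arr p q \<gamma>))
         (stage_cost \<beta> E Pbar f (Jrem p q \<beta> E Pbar f m) P 1 (arr p q \<gamma>))"

definition Jfun ::
  "real \<Rightarrow> real \<Rightarrow> real \<Rightarrow> real \<Rightarrow> real^'n^'n \<Rightarrow> (real^'n^'n \<Rightarrow> real^'n^'n)
   \<Rightarrow> nat \<Rightarrow> nat \<Rightarrow> real^'n^'n \<Rightarrow> bool \<Rightarrow> real" where
  "Jfun p q \<beta> E Pbar f K k = Jrem p q \<beta> E Pbar f (K + 1 - k)"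

definition L1 where
  "L1 p q \<beta> E Pbar f K k P \<nu> = stage_cost \<beta> E Pbar f (Jfun p q \<beta> E Pbar f K (k + 1)) P \<nu> (1 - p)"

definition L0 where
  "L0 p q \<beta> E Pbar f K k P \<nu> = stage_cost \<beta> E Pbar f (Jfun p q \<beta> E Pbar f K (k + 1)) P \<nu> q"

definition decreasing_on :: "(real^'n^'n) set \<Rightarrow> (real^'n^'n \<Rightarrow> real) \<Rightarrow> bool" where
  "decreasing_on S F \<longleftrightarrow> (\<forall>X\<in>S. \<forall>Y\<in>S. loewner_le X Y \<longrightarrow> F Y \<le> F X)"

end

theory Submission
  imports Defs
begin

text \<open>The Lyapunov map is monotone for the Loewner order, hence so is every value function
  \<open>J\<^sub>k(\<cdot>, \<gamma>)\<close> by backward induction. Transmitting (\<open>\<nu> = 1\<close>) instead of not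
  transmitting changes the stage cost by a constant minus \<open>c \<cdot> (\<beta> tr f(P) + J\<^sub>k\<^sub>+\<^sub>1(f(P), 0))\<close>,
  and the subtracted term is increasing in \<open>P\<close> because \<open>c \<ge> 0\<close>.\<close>

lemma psd_congruence:
  fixes A :: "real^'n^'m" and D :: "real^'n^'n"
  assumes "psd D"
  shows "psd (A ** D ** transpose A)"
proof -
  have "transpose D = D"
    using assms by (simp add: psd_def symmetric_mat_def)
  then have "symmetric_mat (A ** D ** transpose A)"
    by (simp add: symmetric_mat_def matrix_transpose_mul matrix_mul_assoc)
  moreover have "0 \<le> x \<bullet> ((A ** D ** transpose A) *v x)" for x
  proof -
    have "x \<bullet> ((A ** D ** transpose A) *v x) = x \<bullet> (A *v (D *v (transpose A *v x)))"
      by (simp only: matrix_vector_mul_assoc matrix_mul_assoc)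
    also have "\<dots> = (x v* A) \<bullet> (D *v (transpose A *v x))"
      by (rule dot_lmul_matrix[symmetric])
    also have "\<dots> = (transpose A *v x) \<bullet> (D *v (transpose A *v x))"
      by (simp add: transpose_matrix_vector)
    finally show ?thesis
      using assms by (simp add: psd_def)
  qed
  ultimately show ?thesis
    by (simp add: psd_def)
qed

lemma lyap_diff:
  fixes A Q X Y :: "real^'n^'n"
  shows "lyap A Q Y - lyap A Q X = A ** (Y - X) ** transpose A"
  by (simp add: lyap_def matrix_matrix_mult_def vec_eq_iff sum_subtractf algebra_simps)

lemma lyap_mono:
  fixes A Q X Y :: "real^'n^'n"
  assumes "loewner_le X Y"
  shows "loewner_le (lyap A Q X) (lyap A Q Y)"
  using assms by (simp add: loewner_le_def lyap_diff psd_congruence)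

lemma psd_diag_nonneg:
  fixes D :: "real^'n^'n"
  assumes "psd D"
  shows "0 \<le> D $ i $ i"
proof -
  have "0 \<le> axis i 1 \<bullet> (D *v axis i 1)"
    using assms by (simp add: psd_def)
  also have "\<dots> = D $ i $ i"
    by (simp add: inner_axis' matrix_vector_mult_basis column_def)
  finally show ?thesis .
qed

lemma loewner_le_trace:
  fixes X Y :: "real^'n^'n"
  assumes "loewner_le X Y"
  shows "trace X \<le> trace Y"
proof -
  have "0 \<le> trace (Y - X)"
    using assms unfolding loewner_le_def trace_def by (intro sum_nonneg psd_diag_nonneg)
  then show ?thesis
    by (simp add: trace_sub)
qed

lemma arr_bounds:
  assumes "0 \<le> p" "p \<le> 1" "0 \<le> q" "q \<le> 1"
  shows "0 \<le> arr p q \<gamma>" "arr p q \<gamma> \<le> 1"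
  using assms by (cases \<gamma>; simp add: arr_def)+

lemma stage_cost_eq:
  "stage_cost \<beta> E Pbar f Jn P \<nu> c =
     \<beta> * \<nu> * c * trace Pbar + (1 - \<beta>) * \<nu> * E + \<nu> * c * Jn Pbar True
     + (1 - \<nu> * c) * (\<beta> * trace (f P) + Jn (f P) False)"
  by (simp add: stage_cost_def algebra_simps)

lemma stage_cost_transmit_gain:
  "stage_cost \<beta> E Pbar f Jn P 1 c - stage_cost \<beta> E Pbar f Jn P 0 c =
     \<beta> * c * trace Pbar + (1 - \<beta>) * E + c * Jn Pbar True
     - c * (\<beta> * trace (f P) + Jn (f P) False)"
  by (simp add: stage_cost_eq algebra_simps)

lemma stage_cost_step_mono:
  fixes f :: "real^'n^'n \<Rightarrow> real^'n^'n"
  assumes f_mono: "loewner_le (f X) (f Y)"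
    and Jn_mono: "\<And>X Y. loewner_le X Y \<Longrightarrow> Jn X False \<le> Jn Y False"
    and "0 \<le> \<beta>"
  shows "\<beta> * trace (f X) + Jn (f X) False \<le> \<beta> * trace (f Y) + Jn (f Y) False"
  using assms loewner_le_trace[OF f_mono] Jn_mono[OF f_mono]
  by (intro add_mono mult_left_mono) auto

lemma stage_cost_mono:
  fixes f :: "real^'n^'n \<Rightarrow> real^'n^'n"
  assumes "loewner_le (f X) (f Y)"
    and "\<And>X Y. loewner_le X Y \<Longrightarrow> Jn X False \<le> Jn Y False"
    and "0 \<le> \<beta>" "\<nu> * c \<le> 1"
  shows "stage_cost \<beta> E Pbar f Jn X \<nu> c \<le> stage_cost \<beta> E Pbar f Jn Y \<nu> c"
proof -
  have "\<beta> * trace (f X) + Jn (f X) False \<le> \<beta> * trace (f Y) + Jn (f Y) False"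
    using assms(1-3) by (rule stage_cost_step_mono)
  then show ?thesis
    using assms(4) by (simp add: stage_cost_eq mult_left_mono)
qed

lemma Jrem_mono:
  fixes f :: "real^'n^'n \<Rightarrow> real^'n^'n"
  assumes f_mono: "\<And>X Y. loewner_le X Y \<Longrightarrow> loewner_le (f X) (f Y)"
    and "0 \<le> p" "p \<le> 1" "0 \<le> q" "q \<le> 1" "0 \<le> \<beta>"
    and "loewner_le X Y"
  shows "Jrem p q \<beta> E Pbar f m X \<gamma> \<le> Jrem p q \<beta> E Pbar f m Y \<gamma>"
  using assms(7)
proof (induction m arbitrary: X Y \<gamma>)
  case 0
  then show ?case by simp
next
  case (Suc m)
  have "stage_cost \<beta> E Pbar f (Jrem p q \<beta> E Pbar f m) X \<nu> (arr p q \<gamma>)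
      \<le> stage_cost \<beta> E Pbar f (Jrem p q \<beta> E Pbar f m) Y \<nu> (arr p q \<gamma>)"
    if "\<nu> = 0 \<or> \<nu> = 1" for \<nu>
    using that arr_bounds[OF assms(2-5), of \<gamma>] Suc
    by (intro stage_cost_mono f_mono assms(6)) auto
  then show ?case
    by (simp add: min_le_iff_disj)
qed

lemma stage_cost_transmit_gain_decreasing:
  fixes f :: "real^'n^'n \<Rightarrow> real^'n^'n"
  assumes f_mono: "\<And>X Y. loewner_le X Y \<Longrightarrow> loewner_le (f X) (f Y)"
    and "0 \<le> p" "p \<le> 1" "0 \<le> q" "q \<le> 1" "0 \<le> \<beta>" "0 \<le> c"
  shows "decreasing_on S (\<lambda>P. stage_cost \<beta> E Pbar f (Jrem p q \<beta> E Pbar f m) P 1 c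
                             - stage_cost \<beta> E Pbar f (Jrem p q \<beta> E Pbar f m) P 0 c)"
  unfolding decreasing_on_def stage_cost_transmit_gain
proof (intro ballI impI)
  fix X Y :: "real^'n^'n"
  assume "loewner_le X Y"
  then have "\<beta> * trace (f X) + Jrem p q \<beta> E Pbar f m (f X) False
      \<le> \<beta> * trace (f Y) + Jrem p q \<beta> E Pbar f m (f Y) False"
    using assms by (intro stage_cost_step_mono Jrem_mono f_mono) auto
  then show "\<beta> * c * trace Pbar + (1 - \<beta>) * E + c * Jrem p q \<beta> E Pbar f m Pbar True
        - c * (\<beta> * trace (f Y) + Jrem p q \<beta> E Pbar f m (f Y) False)
      \<le> \<beta> * c * trace Pbar + (1 - \<beta>) * E + c * Jrem p q \<beta> E Pbar f m Pbar True
        - c * (\<beta> * trace (f X) + Jrem p q \<beta> E Pbar f m (f X) False)"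
    using mult_left_mono assms(7) by auto
qed

theorem lemma6:
  fixes A Q Pbar :: "real^'n^'n" and C :: "real^'n^'m" and R :: "real^'m^'m"
    and p q \<beta> E :: real and K k :: nat
  assumes "psd Q" and "pd R"
    and "detectable A C"
    and "\<exists>S. is_psd_sqrt S Q \<and> stabilizable A S"
    and "kalman_steady_filtered A C Q R Pbar"
    and "0 \<le> p" "p \<le> 1" "0 \<le> q" "q \<le> 1" "0 \<le> E" "0 < \<beta>" "\<beta> < 1"
    and "1 \<le> K" "1 \<le> k" "k \<le> K"
  shows "decreasing_on {(lyap A Q ^^ n) Pbar | n. True}
           (\<lambda>P. L1 p q \<beta> E Pbar (lyap A Q) K k P 1 - L1 p q \<beta> E Pbar (lyap A Q) K k P 0)
       \<and> decreasing_on {(lyap A Q ^^ n) Pbar | n. True}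
           (\<lambda>P. L0 p q \<beta> E Pbar (lyap A Q) K k P 1 - L0 p q \<beta> E Pbar (lyap A Q) K k P 0)"
proof -
  have J_next: "Jfun p q \<beta> E Pbar (lyap A Q) K (k + 1) = Jrem p q \<beta> E Pbar (lyap A Q) (K - k)"
    by (simp add: Jfun_def)
  show ?thesis
    unfolding L1_def L0_def J_next
    using assms by (intro conjI stage_cost_transmit_gain_decreasing lyap_mono) auto
qed

end
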